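(* Let $(X,\overline{x},\delta)$ be a pointed automaton over $\Sigma$. For $x\in X$ let $\nu\mathrm{C}(x,\delta)$ denote $\nu\mathrm{C}(X,x,\delta)$ and let $\mathsf{free}(X,\delta)$ be as in the context. (1) If every state of $X$ is reachable from $\overline{x}$, then $\mathsf{free}(X,\delta)\cong\nu\mathrm{C}(\overline{x},\delta)$. (2) $\mathsf{free}(X,\delta)\cong\prod_{x\in X}\nu\mathrm{C}(x,\delta)$, where the product is taken in $\mathrm{Alg}_r(G_1)$.
   Context: $\Sigma$ is a finite alphabet, $\Sigma^\ast$ the free monoid with empty word $\epsilon$. A pointed automaton is $(X,\overline{x},\delta)$ with $\overline{x}\in X$, $\delta:X\to X^\Sigma$, extended to words by $\delta(x)(\epsilon)=x$, $\delta(x)(wa)=\delta(\delta(x)(w))(a)$; it is reachable if every state is $\delta(\overline{x})(u)$ for some $u$. Morphisms preserve initial states and commute with transitions; $\mathrm{Alg}_r(G_1)$ is the category of reachable pointed automata (it is a preorder, and the product of a family in it is the reachable part, from the tuple of initial states, of the componentwise product automaton). For a state $y$, $\langle y\rangle=\{\delta(y)(u)\mid u\in\Sigma^\ast\}$. For a congruence $C$ on $\Sigma^\ast$, let $Q(C)$ be the pointed automaton $(\Sigma^\ast/C,[\epsilon]_C,\sigma)$ with $\sigma([w]_C)(a)=[wa]_C$. Define $\nu\mathrm{C}(X,\overline{x},\delta)=Q(\sim_{\overline{x}})$ where $u\sim_{\overline{x}}v$ iff $\delta(y)(u)=\delta(y)(v)$ for all $y\in\langle\overline{x}\rangle$ (the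 kernel of the transition monoid map of the reachable part). Define $\mathsf{free}(X,\delta)=Q(\ker\delta^\sharp)$ where $(u,v)\in\ker\delta^\sharp$ iff $\delta(x)(u)=\delta(x)(v)$ for all $x\in X$ ($\ker\delta^\sharp$ is the largest set of equations satisfied by $(X,\delta)$). *)

theory Defs
  imports Main
begin

type_synonym ('s, 'a) pautomaton = "'s set \<times> 's \<times> ('s \<Rightarrow> 'a \<Rightarrow> 's)"

definition states :: "('s, 'a) pautomaton \<Rightarrow> 's set" where
  "states A = fst A"
definition init :: "('s, 'a) pautomaton \<Rightarrow> 's" where
  "init A = fst (snd A)"
definition trans :: "('s, 'a) pautomaton \<Rightarrow> 's \<Rightarrow> 'a \<Rightarrow> 's" where
  "trans A = snd (snd A)"

definition dstar :: "('s \<Rightarrow> 'a \<Rightarrow> 's) \<Rightarrow> 's \<Rightarrow> 'a list \<Rightarrow> 's" where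
  "dstar d x w = foldl d x w"

definition is_pautomaton :: "('s, 'a) pautomaton \<Rightarrow> bool" where
  "is_pautomaton A \<longleftrightarrow> init A \<in> states A \<and>
     (\<forall>x\<in>states A. \<forall>a. trans A x a \<in> states A)"

definition generated :: "('s \<Rightarrow> 'a \<Rightarrow> 's) \<Rightarrow> 's \<Rightarrow> 's set" where
  "generated d y = {dstar d y u | u. True}"

definition reachable :: "('s, 'a) pautomaton \<Rightarrow> bool" where
  "reachable A \<longleftrightarrow> states A = generated (trans A) (init A)"

definition pa_iso :: "('s, 'a) pautomaton \<Rightarrow> ('t, 'a) pautomaton \<Rightarrow> bool" where
  "pa_iso A B \<longleftrightarrow> (\<exists>f. bij_betw f (states A) (states B) \<and> f (init A) = init B \<and>
     (\<forall>x\<in>states A. \<forall>a. f (trans A x a) = trans B (f x) a))"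

text \<open>Q(C) for a congruence C on words: states are the classes, initial state
  the class of the empty word, transition [w] a = [wa].\<close>
definition Qaut :: "('a list \<times> 'a list) set \<Rightarrow> ('a list set, 'a) pautomaton" where
  "Qaut C = (UNIV // C, C `` {[]}, (\<lambda>c a. \<Union>w\<in>c. C `` {w @ [a]}))"

definition simrel :: "('s \<Rightarrow> 'a \<Rightarrow> 's) \<Rightarrow> 's \<Rightarrow> ('a list \<times> 'a list) set" where
  "simrel d x0 = {(u, v). \<forall>y\<in>generated d x0. dstar d y u = dstar d y v}"

definition nuC :: "'s set \<Rightarrow> 's \<Rightarrow> ('s \<Rightarrow> 'a \<Rightarrow> 's) \<Rightarrow> ('a list set, 'a) pautomaton" where
  "nuC X x0 d = Qaut (simrel d x0)"

definition kerd :: "'s set \<Rightarrow> ('s \<Rightarrow> 'a \<Rightarrow> 's) \<Rightarrow> ('a list \<times> 'a list) set" where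
  "kerd X d = {(u, v). \<forall>x\<in>X. dstar d x u = dstar d x v}"

definition free :: "'s set \<Rightarrow> ('s \<Rightarrow> 'a \<Rightarrow> 's) \<Rightarrow> ('a list set, 'a) pautomaton" where
  "free X d = Qaut (kerd X d)"

text \<open>Product in Alg_r: reachable part (from the tuple of initial states) of the
  componentwise product; tuples are functions restricted to the index set I.\<close>
definition prod_r :: "'i set \<Rightarrow> ('i \<Rightarrow> ('s, 'a) pautomaton) \<Rightarrow> ('i \<Rightarrow> 's, 'a) pautomaton" where
  "prod_r I A =
    (let i0 = (\<lambda>i. if i \<in> I then init (A i) else undefined);
         tr = (\<lambda>f a. (\<lambda>i. if i \<in> I then trans (A i) (f i) a else undefined))
     in (generated tr i0, i0, tr))"

end

theory Submission
  imports Defs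
begin

text \<open>Every reachable pointed automaton B is isomorphic to Q(K), where K identifies two words
  iff they lead from the initial state of B to the same state. The product in Alg_r of the
  automata Q(C i) is reachable by construction, and its run identifies two words iff every C i
  does, so it is Q of the intersection of the C i. For the family of the Q(simrel d x), x in X,
  that intersection is kerd X d, because the states generated by x lie in X and include x.
  If X is generated by x0, then already simrel d x0 = kerd X d.\<close>

lemma dstar_Nil [simp]: "dstar d x [] = x"
  by (simp add: dstar_def)

lemma dstar_snoc [simp]: "dstar d x (w @ [a]) = d (dstar d x w) a"
  by (simp add: dstar_def)

lemma dstar_closed:
  assumes "\<forall>x\<in>X. \<forall>a. d x a \<in> X" and "x \<in> X"
  shows "dstar d x w \<in> X"
  using assms by (induction w rule: rev_induct) auto

lemma self_in_generated: "x \<in> generated d x"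
  unfolding generated_def by (auto intro: exI[of _ "[]"])

lemma generated_subset:
  assumes "\<forall>x\<in>X. \<forall>a. d x a \<in> X" and "x \<in> X"
  shows "generated d x \<subseteq> X"
  using dstar_closed[OF assms] by (auto simp: generated_def)

definition right_congruence :: "('a list \<times> 'a list) set \<Rightarrow> bool" where
  "right_congruence C \<longleftrightarrow> equiv UNIV C \<and> (\<forall>u v a. (u, v) \<in> C \<longrightarrow> (u @ [a], v @ [a]) \<in> C)"

lemma right_congruence_kerd: "right_congruence (kerd S d)"
  unfolding right_congruence_def equiv_def refl_on_def sym_def Relation.trans_def kerd_def
  by auto

lemma simrel_eq_kerd: "simrel d x = kerd (generated d x) d"
  by (simp add: simrel_def kerd_def)

lemma kerd_eq_INT_simrel:
  assumes "\<forall>x\<in>X. \<forall>a. d x a \<in> X"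
  shows "kerd X d = (\<Inter>x\<in>X. simrel d x)"
proof (intro equalityI subsetI)
  fix p assume "p \<in> kerd X d"
  then show "p \<in> (\<Inter>x\<in>X. simrel d x)"
    using generated_subset[OF assms] by (fastforce simp: kerd_def simrel_def)
next
  fix p assume "p \<in> (\<Inter>x\<in>X. simrel d x)"
  then show "p \<in> kerd X d"
    using self_in_generated by (fastforce simp: kerd_def simrel_def)
qed

lemma states_Qaut: "states (Qaut C) = UNIV // C"
  by (simp add: Qaut_def states_def)

lemma init_Qaut: "init (Qaut C) = C `` {[]}"
  by (simp add: Qaut_def init_def)

lemma trans_Qaut:
  assumes "right_congruence C"
  shows "trans (Qaut C) (C `` {w}) a = C `` {w @ [a]}"
proof -
  have equiv: "equiv UNIV C" and cong: "\<And>u v. (u, v) \<in> C \<Longrightarrow> (u @ [a], v @ [a]) \<in> C"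
    using assms by (auto simp: right_congruence_def)
  have "C `` {v @ [a]} = C `` {w @ [a]}" if "v \<in> C `` {w}" for v
    using that cong equiv_class_eq[OF equiv] by blast
  moreover have "w \<in> C `` {w}"
    using equiv_class_self[OF equiv] by simp
  ultimately have "(\<Union>v\<in>C `` {w}. C `` {v @ [a]}) = C `` {w @ [a]}"
    by blast
  then show ?thesis
    by (simp add: Qaut_def trans_def)
qed

lemma dstar_Qaut:
  assumes "right_congruence C"
  shows "dstar (trans (Qaut C)) (init (Qaut C)) w = C `` {w}"
  by (induction w rule: rev_induct) (simp_all add: init_Qaut trans_Qaut[OF assms])

lemma pa_iso_refl: "pa_iso A A"
  unfolding pa_iso_def by (rule exI[of _ id]) auto

lemma pa_iso_Qaut_kerd_init:
  assumes "reachable B"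
  shows "pa_iso (Qaut (kerd {init B} (trans B))) B"
proof -
  let ?K = "kerd {init B} (trans B)"
  let ?run = "dstar (trans B) (init B)"
  define f where "f c = ?run (SOME w. w \<in> c)" for c
  have equiv: "equiv UNIV ?K"
    using right_congruence_kerd unfolding right_congruence_def by blast
  have f_class: "f (?K `` {w}) = ?run w" for w
  proof -
    have "w \<in> ?K `` {w}"
      using equiv_class_self[OF equiv] by simp
    then have "(SOME v. v \<in> ?K `` {w}) \<in> ?K `` {w}"
      by (rule someI)
    then show ?thesis
      by (simp add: f_def kerd_def)
  qed
  have "inj_on f (UNIV // ?K)"
  proof (rule inj_onI)
    fix c c' assume "c \<in> UNIV // ?K" "c' \<in> UNIV // ?K" "f c = f c'"
    then obtain u v where "c = ?K `` {u}" "c' = ?K `` {v}" "?run u = ?run v"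
      by (auto elim!: quotientE simp: f_class)
    then show "c = c'"
      using equiv_class_eq[OF equiv] by (simp add: kerd_def)
  qed
  moreover have "f ` (UNIV // ?K) = states B"
    using assms by (auto simp: quotient_def f_class reachable_def generated_def image_iff)
  moreover have "f (trans (Qaut ?K) c a) = trans B (f c) a" if "c \<in> UNIV // ?K" for c a
    using that by (auto elim!: quotientE simp: trans_Qaut[OF right_congruence_kerd] f_class)
  ultimately show ?thesis
    unfolding pa_iso_def bij_betw_def
    by (intro exI[of _ f]) (simp add: states_Qaut init_Qaut f_class)
qed

lemma reachable_prod_r: "reachable (prod_r I A)"
  by (simp add: reachable_def prod_r_def Let_def states_def init_def trans_def)

lemma dstar_prod_r:
  "dstar (trans (prod_r I A)) (init (prod_r I A)) w =
     (\<lambda>i. if i \<in> I then dstar (trans (A i)) (init (A i)) w else undefined)"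
  by (induction w rule: rev_induct) (auto simp: prod_r_def Let_def init_def trans_def)

lemma kerd_init_prod_r_Qaut:
  assumes "\<forall>i\<in>I. right_congruence (C i)"
  shows "kerd {init (prod_r I (\<lambda>i. Qaut (C i)))} (trans (prod_r I (\<lambda>i. Qaut (C i)))) =
           (\<Inter>i\<in>I. C i)"
proof -
  have "C i `` {u} = C i `` {v} \<longleftrightarrow> (u, v) \<in> C i" if "i \<in> I" for i u v
    using assms that eq_equiv_class_iff[of UNIV "C i" u v] by (simp add: right_congruence_def)
  then show ?thesis
    using assms by (auto simp: kerd_def dstar_prod_r dstar_Qaut fun_eq_iff)
qed

theorem mainTheorem4:
  fixes X :: "'s set" and x0 :: 's and d :: "'s \<Rightarrow> 'a::finite \<Rightarrow> 's"
  assumes "is_pautomaton (X, x0, d)"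
  shows "(reachable (X, x0, d) \<longrightarrow> pa_iso (free X d) (nuC X x0 d))
       \<and> pa_iso (free X d) (prod_r X (\<lambda>x. nuC X x d))"
proof
  show "reachable (X, x0, d) \<longrightarrow> pa_iso (free X d) (nuC X x0 d)"
  proof
    assume "reachable (X, x0, d)"
    then have "X = generated d x0"
      by (simp add: reachable_def states_def init_def trans_def)
    then have "free X d = nuC X x0 d"
      by (simp add: free_def nuC_def simrel_eq_kerd)
    then show "pa_iso (free X d) (nuC X x0 d)"
      by (simp add: pa_iso_refl)
  qed
next
  let ?P = "prod_r X (\<lambda>x. Qaut (simrel d x))"
  have closed: "\<forall>x\<in>X. \<forall>a. d x a \<in> X"
    using assms by (simp add: is_pautomaton_def states_def trans_def)
  have "kerd {init ?P} (trans ?P) = kerd X d"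
    by (simp add: kerd_init_prod_r_Qaut simrel_eq_kerd right_congruence_kerd
        kerd_eq_INT_simrel[OF closed])
  then show "pa_iso (free X d) (prod_r X (\<lambda>x. nuC X x d))"
    using pa_iso_Qaut_kerd_init[OF reachable_prod_r, of X "\<lambda>x. Qaut (simrel d x)"]
    by (simp add: free_def nuC_def)
qed

end
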